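(* Let $\Omega\subset\mathbb{C}$ be a bounded domain with smooth boundary, let $p_1,\dots,p_n\in\Omega$, and let $u$ be a solution of $\Delta u=e^{2u}$ in $\Omega-\{p_1,\dots,p_n\}$ with $u(x)\to+\infty$ as $x$ approaches $\partial\Omega$ or any $p_l$. Suppose that for each $l=1,\dots,n$, $$u(x)\ge-\log\Bigl(-r_l\,|x-p_l|\,\log\Bigl(\frac{|x-p_l|}{r_l}\Bigr)\Bigr)$$ near $p_l$, where $r_l>0$ is such that $B_{r_l}(p_l)\supset\Omega$. Then there exists a constant $C$ such that $$\Bigl|u(x)+\log\bigl(-|x-p_l|\log|x-p_l|\bigr)\Bigr|<C$$ in a neighborhood of $p_l$, for all $l=1,\dots,n$.
   Context: $\Delta$ is the Euclidean Laplacian; $B_r(p)$ is the open Euclidean disk of radius $r$ centered at $p$. *)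

theory Defs
  imports "HOL-Analysis.Analysis"
begin

definition dx :: "(complex \<Rightarrow> real) \<Rightarrow> complex \<Rightarrow> real" where
  "dx f = (\<lambda>z. frechet_derivative f (at z) 1)"

definition dy :: "(complex \<Rightarrow> real) \<Rightarrow> complex \<Rightarrow> real" where
  "dy f = (\<lambda>z. frechet_derivative f (at z) \<i>)"

definition C_inf_on :: "complex set \<Rightarrow> (complex \<Rightarrow> real) \<Rightarrow> bool" where
  "C_inf_on U f \<longleftrightarrow> (\<exists>F. f \<in> F \<and> (\<forall>g\<in>F. g differentiable_on U \<and> dx g \<in> F \<and> dy g \<in> F))"

definition C2_on :: "complex set \<Rightarrow> (complex \<Rightarrow> real) \<Rightarrow> bool" where
  "C2_on U f \<longleftrightarrow> f differentiable_on U \<and> dx f differentiable_on U \<and> dy f differentiable_on U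
     \<and> continuous_on U (dx (dx f)) \<and> continuous_on U (dy (dx f))
     \<and> continuous_on U (dx (dy f)) \<and> continuous_on U (dy (dy f))"

definition laplacian :: "(complex \<Rightarrow> real) \<Rightarrow> complex \<Rightarrow> real" where
  "laplacian f z = dx (dx f) z + dy (dy f) z"

definition smooth_boundary :: "complex set \<Rightarrow> bool" where
  "smooth_boundary \<Omega> \<longleftrightarrow> (\<forall>z\<in>frontier \<Omega>. \<exists>V \<rho>. open V \<and> z \<in> V \<and> C_inf_on V \<rho>
      \<and> (\<forall>x\<in>V. (dx \<rho> x, dy \<rho> x) \<noteq> (0, 0))
      \<and> \<Omega> \<inter> V = {x\<in>V. \<rho> x < 0})"

end

(*
  Everything rests on a comparison principle for Delta u = exp (2 u): if v (x) = G (|x - c|^2)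
  satisfies Delta v <= exp (2 v) on a bounded open set D and v - u tends to +infinity at the
  frontier of D, then u <= v on D, because at an interior maximum of u - v one would have
  exp (2 u) = Delta u <= Delta v <= exp (2 v) < exp (2 u).

  Osserman's barrier ln (2 R / (R^2 - |x - c|^2)) on discs gives u (x) <= ln 4 - ln |x - p| near
  a puncture p. This a priori bound lets the barriers -ln r - ln (ln (rho / r)) + e ln (rho / r),
  r = |x - p|, dominate u on a punctured disc for every e > 0, and e -> 0 yields
  u <= -ln (r ln (rho / r)). Together with the assumed lower bound this traps
  u + ln (-r ln r) between two constants near each puncture.
*)
theory Submission
  imports Defs "HOL-Real_Asymp.Real_Asymp"
begin

lemma local_max_imp_second_derivative_nonpos:
  fixes g g' :: "real \<Rightarrow> real"
  assumes e: "e > 0"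
    and g: "\<And>t. \<bar>t\<bar> < e \<Longrightarrow> (g has_real_derivative g' t) (at t)"
    and g': "(g' has_real_derivative c) (at 0)"
    and max: "\<And>t. \<bar>t\<bar> < e \<Longrightarrow> g t \<le> g 0"
  shows "c \<le> 0"
proof (rule ccontr)
  assume "\<not> c \<le> 0"
  hence "c > 0" by simp
  have "g' 0 = 0"
    by (rule DERIV_local_max[OF g[of 0] e]) (use e max in auto)
  obtain d where d: "d > 0" "\<And>h. h > 0 \<Longrightarrow> h < d \<Longrightarrow> g' 0 < g' (0 + h)"
    using DERIV_pos_inc_right[OF g' \<open>c > 0\<close>] by blast
  define t where "t = min d e / 2"
  have t: "t > 0" "t < d" "t < e" using d e by (auto simp: t_def)
  obtain z where z: "0 < z" "z < t" "g t - g 0 = (t - 0) * g' z"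
    using MVT2[of 0 t g g'] t g by force
  have "g' z > 0" using d(2)[of z] z t \<open>g' 0 = 0\<close> by auto
  hence "t * g' z > 0" using t by simp
  hence "g t > g 0" using z by simp
  with max[of t] t show False by auto
qed

lemma has_real_derivative_along_line:
  fixes f :: "complex \<Rightarrow> real"
  assumes "f differentiable (at (z + of_real t * d))"
  shows "((\<lambda>s. f (z + of_real s * d)) has_real_derivative
           frechet_derivative f (at (z + of_real t * d)) d) (at t)"
proof -
  let ?f' = "frechet_derivative f (at (z + of_real t * d))"
  have "(f has_derivative ?f') (at (z + of_real t * d))"
    using assms frechet_derivative_works by blast
  moreover have "((\<lambda>s. z + of_real s * d) has_derivative (\<lambda>s. s *\<^sub>R d)) (at t)"
    by (auto intro!: derivative_eq_intros simp: scaleR_conv_of_real)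
  ultimately have "((\<lambda>s. f (z + of_real s * d)) has_derivative (\<lambda>s. ?f' (s *\<^sub>R d))) (at t)"
    using diff_chain_at by (auto simp: o_def)
  moreover have "(\<lambda>s. ?f' (s *\<^sub>R d)) = (*) (?f' d)"
    using assms by (simp add: fun_eq_iff linear_scale[OF linear_frechet_derivative] ac_simps)
  ultimately show ?thesis
    by (simp add: has_field_derivative_def)
qed

lemma cmod_add_line_power2:
  assumes "cmod d = 1"
  shows "cmod (w + of_real s * d)^2 = (Re (cnj d * w) + s)^2 + (cmod w^2 - Re (cnj d * w)^2)"
proof -
  have "Re d^2 + Im d^2 = 1" using assms by (simp add: cmod_power2 [symmetric])
  thus ?thesis by (simp add: cmod_power2) algebra
qed

lemma directional_second_derivative_le_at_radial_max:
  fixes u :: "complex \<Rightarrow> real" and G G' G'' :: "real \<Rightarrow> real"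
  assumes d: "cmod d = 1" and e: "e > 0"
    and u: "\<And>s. \<bar>s\<bar> < e \<Longrightarrow> u differentiable at (x + of_real s * d)"
    and Du: "(\<lambda>z. frechet_derivative u (at z) d) differentiable at x"
    and Q: "open Q" "cmod (x - c)^2 \<in> Q"
    and G: "\<forall>q\<in>Q. (G has_real_derivative G' q) (at q) \<and> (G' has_real_derivative G'' q) (at q)"
    and max: "\<And>s. \<bar>s\<bar> < e \<Longrightarrow>
      u (x + of_real s * d) - G (cmod (x + of_real s * d - c)^2) \<le> u x - G (cmod (x - c)^2)"
  shows "frechet_derivative (\<lambda>z. frechet_derivative u (at z) d) (at x) d
    \<le> 4 * Re (cnj d * (x - c))^2 * G'' (cmod (x - c)^2) + 2 * G' (cmod (x - c)^2)"
proof -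
  define a where "a = Re (cnj d * (x - c))"
  define k where "k = cmod (x - c)^2 - a^2"
  have profile: "cmod (x + of_real s * d - c)^2 = (a + s)^2 + k" for s
    using cmod_add_line_power2[OF d, of "x - c" s] by (simp add: a_def k_def algebra_simps)
  have "open ((\<lambda>s. (a + s)^2 + k) -` Q)"
    by (intro continuous_open_vimage Q(1) continuous_intros)
  moreover have "0 \<in> (\<lambda>s. (a + s)^2 + k) -` Q" using Q(2) by (simp add: k_def)
  ultimately obtain e1 where e1: "e1 > 0" "ball 0 e1 \<subseteq> (\<lambda>s. (a + s)^2 + k) -` Q"
    unfolding open_contains_ball by blast
  define e' where "e' = min e e1"
  have "e' > 0" using e e1 by (simp add: e'_def)
  have in_Q: "(a + s)^2 + k \<in> Q" if "\<bar>s\<bar> < e'" for s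
    using that e1(2) by (auto simp: e'_def)
  have "((\<lambda>s. u (x + of_real s * d) - G ((a + s)^2 + k)) has_real_derivative
      frechet_derivative u (at (x + of_real s * d)) d - G' ((a + s)^2 + k) * (2 * (a + s))) (at s)"
    if "\<bar>s\<bar> < e'" for s
  proof -
    have "(G has_real_derivative G' ((a + s)^2 + k)) (at ((a + s)^2 + k))"
      using G in_Q[OF that] by blast
    thus ?thesis
      using u[of s] that
      by (auto intro!: derivative_eq_intros has_real_derivative_along_line DERIV_chain2
               simp: e'_def simp del: of_real_mult)
  qed
  moreover have "((\<lambda>s. frechet_derivative u (at (x + of_real s * d)) d - G' ((a + s)^2 + k) * (2 * (a + s)))
      has_real_derivative frechet_derivative (\<lambda>z. frechet_derivative u (at z) d) (at x) d
        - (G'' (a^2 + k) * (2 * a) * (2 * a) + G' (a^2 + k) * 2)) (at 0)"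
  proof -
    have "(G' has_real_derivative G'' (a^2 + k)) (at ((a + 0)^2 + k))"
      using G Q(2) by (simp add: k_def)
    thus ?thesis
      using has_real_derivative_along_line[of "\<lambda>z. frechet_derivative u (at z) d" x 0 d] Du
      by (auto intro!: derivative_eq_intros DERIV_chain2)
  qed
  moreover have "u (x + of_real s * d) - G ((a + s)^2 + k) \<le> u (x + of_real 0 * d) - G ((a + 0)^2 + k)"
    if "\<bar>s\<bar> < e'" for s
    using max[of s] that profile[of s] profile[of 0] by (simp add: e'_def)
  ultimately have "frechet_derivative (\<lambda>z. frechet_derivative u (at z) d) (at x) d
      - (G'' (a^2 + k) * (2 * a) * (2 * a) + G' (a^2 + k) * 2) \<le> 0"
    by (rule local_max_imp_second_derivative_nonpos[OF \<open>e' > 0\<close>])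
  thus ?thesis by (simp add: a_def k_def power2_eq_square algebra_simps)
qed

lemma C2_on_subset: "C2_on U u \<Longrightarrow> V \<subseteq> U \<Longrightarrow> C2_on V u"
  unfolding C2_on_def by (meson continuous_on_subset differentiable_on_subset)

lemma C2_on_differentiable_at:
  assumes "open U" "C2_on U u" "y \<in> U"
  shows "u differentiable (at y)" "dx u differentiable (at y)" "dy u differentiable (at y)"
  using assms unfolding C2_on_def by (auto simp: differentiable_on_eq_differentiable_at)

lemma C2_on_tendsto:
  assumes "open U" "C2_on U u" "b \<in> U"
  shows "(u \<longlongrightarrow> u b) (at b within S)"
  using differentiable_imp_continuous_within[OF C2_on_differentiable_at(1)[OF assms]]
  by (simp add: continuous_at_imp_continuous_at_within continuous_within [symmetric])

lemma laplacian_le_at_radial_max: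
  fixes u :: "complex \<Rightarrow> real" and G G' G'' :: "real \<Rightarrow> real"
  assumes u: "open U" "C2_on U u" and e: "e > 0" "ball x e \<subseteq> U"
    and Q: "open Q" "cmod (x - c)^2 \<in> Q"
    and G: "\<forall>q\<in>Q. (G has_real_derivative G' q) (at q) \<and> (G' has_real_derivative G'' q) (at q)"
    and max: "\<And>y. y \<in> ball x e \<Longrightarrow> u y - G (cmod (y - c)^2) \<le> u x - G (cmod (x - c)^2)"
  shows "laplacian u x \<le> 4 * cmod (x - c)^2 * G'' (cmod (x - c)^2) + 4 * G' (cmod (x - c)^2)"
proof -
  have on_line: "x + of_real s * d \<in> ball x e" if "cmod d = 1" "\<bar>s\<bar> < e" for s d
    using that by (simp add: dist_norm norm_mult)
  have directional: "frechet_derivative (\<lambda>z. frechet_derivative u (at z) d) (at x) d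
      \<le> 4 * Re (cnj d * (x - c))^2 * G'' (cmod (x - c)^2) + 2 * G' (cmod (x - c)^2)"
    if "cmod d = 1" "(\<lambda>z. frechet_derivative u (at z) d) differentiable at x" for d
    by (rule directional_second_derivative_le_at_radial_max[OF that(1) e(1) _ that(2) Q G])
       (use on_line[OF that(1)] e(2) max C2_on_differentiable_at(1)[OF u] in blast)+
  have "x \<in> U" using e by auto
  have "laplacian u x \<le> 4 * (Re (x - c)^2 + Im (x - c)^2) * G'' (cmod (x - c)^2) + 4 * G' (cmod (x - c)^2)"
    using directional[of 1] directional[of \<i>] C2_on_differentiable_at(2,3)[OF u \<open>x \<in> U\<close>]
    unfolding laplacian_def dx_def dy_def by (simp add: distrib_right)
  thus ?thesis by (simp add: cmod_power2)
qed

text \<open>Since \<open>\<Delta> G(|x - c|\<^sup>2) = 4 |x - c|\<^sup>2 G''(|x - c|\<^sup>2) + 4 G'(|x - c|\<^sup>2)\<close>, this says that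
  \<open>v x = G(|x - c|\<^sup>2)\<close> satisfies \<open>\<Delta> v \<le> exp (2 v)\<close> wherever \<open>|x - c|\<^sup>2 \<in> Q\<close>.\<close>
definition radial_supersolution :: "real set \<Rightarrow> (real \<Rightarrow> real) \<Rightarrow> bool" where
  "radial_supersolution Q G \<longleftrightarrow> open Q \<and> (\<exists>G' G''. \<forall>q\<in>Q.
     (G has_real_derivative G' q) (at q) \<and> (G' has_real_derivative G'' q) (at q)
     \<and> 4 * q * G'' q + 4 * G' q \<le> exp (2 * G q))"

lemma continuous_attains_sup_if_below_near_frontier:
  fixes h :: "'a::heine_borel \<Rightarrow> real"
  assumes D: "open D" "bounded D" and h: "continuous_on D h" and "x0 \<in> D"
    and frontier: "\<And>b. b \<in> frontier D \<Longrightarrow> eventually (\<lambda>x. h x < h x0) (at b within D)"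
  shows "\<exists>x\<in>D. \<forall>y\<in>D. h y \<le> h x"
proof -
  define S where "S = {x \<in> D. h x0 \<le> h x}"
  have "closedin (top_of_set D) S"
    unfolding S_def using continuous_closedin_preimage[OF h closed_atLeast, of "h x0"]
    by (simp add: vimage_def Int_def conj_commute)
  then obtain T where T: "closed T" "S = D \<inter> T" by (auto simp: closedin_closed)
  have "closure S \<subseteq> S"
  proof
    fix z assume z: "z \<in> closure S"
    have "z \<in> T" using z T closure_minimal[of S T] by auto
    show "z \<in> S"
    proof (rule ccontr)
      assume "z \<notin> S"
      hence "z \<notin> D" using \<open>z \<in> T\<close> T by auto
      moreover have "z \<in> closure D" using z closure_mono[of S D] by (auto simp: S_def)
      ultimately have "z \<in> frontier D" using D(1) by (simp add: frontier_def interior_open)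
      then obtain d where d: "d > 0" "\<And>y. y \<in> D \<Longrightarrow> y \<noteq> z \<Longrightarrow> dist y z < d \<Longrightarrow> h y < h x0"
        using frontier unfolding eventually_at by blast
      obtain y where "y \<in> S" "dist y z < d"
        using z d(1) closure_approachable by blast
      thus False using d(2)[of y] \<open>z \<notin> D\<close> by (auto simp: S_def)
    qed
  qed
  hence "closed S" by (simp add: closure_subset_eq)
  moreover have "bounded S" using D(2) by (rule bounded_subset) (auto simp: S_def)
  ultimately have "compact S" by (simp add: compact_eq_bounded_closed)
  moreover have "x0 \<in> S" using \<open>x0 \<in> D\<close> by (simp add: S_def)
  moreover have "continuous_on S h" using h by (rule continuous_on_subset) (auto simp: S_def)
  ultimately obtain x1 where x1: "x1 \<in> S" "\<And>y. y \<in> S \<Longrightarrow> h y \<le> h x1"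
    using continuous_attains_sup[of S h] by blast
  have "h y \<le> h x1" if "y \<in> D" for y
    using x1(2)[of y] x1(2)[OF \<open>x0 \<in> S\<close>] that by (cases "h x0 \<le> h y") (auto simp: S_def)
  thus ?thesis using x1(1) by (auto simp: S_def)
qed

lemma comparison_with_radial_supersolution:
  fixes u :: "complex \<Rightarrow> real"
  assumes D: "open D" "bounded D" and u: "C2_on D u" "\<And>y. y \<in> D \<Longrightarrow> laplacian u y = exp (2 * u y)"
    and G: "radial_supersolution Q G" "\<And>y. y \<in> D \<Longrightarrow> cmod (y - c)^2 \<in> Q"
    and frontier: "\<And>b. b \<in> frontier D \<Longrightarrow>
      filterlim (\<lambda>y. G (cmod (y - c)^2) - u y) at_top (at b within D)"
    and "x \<in> D"
  shows "u x \<le> G (cmod (x - c)^2)"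
proof (rule ccontr)
  obtain G' G'' where "open Q" and G':
    "\<And>q. q \<in> Q \<Longrightarrow> (G has_real_derivative G' q) (at q) \<and> (G' has_real_derivative G'' q) (at q)
       \<and> 4 * q * G'' q + 4 * G' q \<le> exp (2 * G q)"
    using G(1) unfolding radial_supersolution_def by blast
  define h where "h y = u y - G (cmod (y - c)^2)" for y
  assume "\<not> u x \<le> G (cmod (x - c)^2)"
  hence "h x > 0" by (simp add: h_def)
  have "isCont (\<lambda>y. G (cmod (y - c)^2)) y" if "y \<in> D" for y
  proof -
    have "isCont G (cmod (y - c)^2)" using G' G(2)[OF that] DERIV_isCont by blast
    thus ?thesis
      using continuous_at_compose[of y "\<lambda>y. cmod (y - c)^2" G] by (simp add: o_def)
  qed
  hence "continuous_on D (\<lambda>y. G (cmod (y - c)^2))"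
    by (simp add: continuous_at_imp_continuous_on)
  moreover have "continuous_on D u"
    using u(1) differentiable_imp_continuous_on unfolding C2_on_def by blast
  ultimately have "continuous_on D h" unfolding h_def by (intro continuous_intros)
  moreover have "eventually (\<lambda>y. h y < h x) (at b within D)" if "b \<in> frontier D" for b
    using filterlim_at_top_dense[THEN iffD1, OF frontier[OF that], rule_format, of "- h x"]
    by eventually_elim (simp add: h_def)
  ultimately obtain x1 where x1: "x1 \<in> D" "\<And>y. y \<in> D \<Longrightarrow> h y \<le> h x1"
    using continuous_attains_sup_if_below_near_frontier[OF D _ \<open>x \<in> D\<close>] by blast
  obtain e where e: "e > 0" "ball x1 e \<subseteq> D" using D(1) x1(1) open_contains_ball by blast
  have "laplacian u x1 \<le> 4 * cmod (x1 - c)^2 * G'' (cmod (x1 - c)^2) + 4 * G' (cmod (x1 - c)^2)"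
  proof (rule laplacian_le_at_radial_max[OF D(1) u(1) e \<open>open Q\<close> G(2)[OF x1(1)]])
    show "\<forall>q\<in>Q. (G has_real_derivative G' q) (at q) \<and> (G' has_real_derivative G'' q) (at q)"
      using G' by blast
    show "u y - G (cmod (y - c)^2) \<le> u x1 - G (cmod (x1 - c)^2)" if "y \<in> ball x1 e" for y
      using x1(2)[of y] e(2) that by (auto simp: h_def)
  qed
  also have "\<dots> \<le> exp (2 * G (cmod (x1 - c)^2))" using G' G(2)[OF x1(1)] by blast
  finally have "u x1 \<le> G (cmod (x1 - c)^2)" using u(2)[OF x1(1)] by simp
  thus False using x1(2)[OF \<open>x \<in> D\<close>] \<open>h x > 0\<close> by (simp add: h_def)
qed

lemma filterlim_uminus_ln_at_top:
  fixes f :: "'a \<Rightarrow> real"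
  assumes "(f \<longlongrightarrow> 0) F" "eventually (\<lambda>x. 0 < f x) F"
  shows "filterlim (\<lambda>x. - ln (f x)) at_top F"
  using filterlim_compose[OF ln_at_0 tendsto_imp_filterlim_at_right[OF assms]]
  by (simp add: filterlim_uminus_at_top)

lemma radial_supersolution_osserman:
  assumes "R > 0"
  shows "radial_supersolution {..<R^2} (\<lambda>q. ln (2 * R) - ln (R^2 - q))"
  unfolding radial_supersolution_def
proof (intro conjI exI ballI)
  fix q assume "q \<in> {..<R^2}"
  hence q: "R^2 - q > 0" by simp
  show "((\<lambda>q. ln (2 * R) - ln (R^2 - q)) has_real_derivative 1 / (R^2 - q)) (at q)"
    using q by (auto intro!: derivative_eq_intros simp: field_simps)
  show "((\<lambda>q. 1 / (R^2 - q)) has_real_derivative 1 / (R^2 - q)^2) (at q)"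
    using q by (auto intro!: derivative_eq_intros simp: field_simps power2_eq_square)
  define w where "w = R^2 - q"
  have "w > 0" using q by (simp add: w_def)
  have "exp (2 * (ln (2 * R) - ln w)) = (exp (ln (2 * R) - ln w))^2"
    by (metis exp_of_nat_mult of_nat_numeral)
  also have "\<dots> = (2 * R / w)^2"
    using q assms by (simp add: exp_diff w_def)
  also have "\<dots> = (4 * q + 4 * w) / w^2"
    by (simp add: power_divide power_mult_distrib w_def)
  also have "\<dots> = 4 * q * (1 / w^2) + 4 * (1 / w)"
    using \<open>w > 0\<close> by (simp add: field_simps power2_eq_square)
  finally show "4 * q * (1 / (R^2 - q)^2) + 4 * (1 / (R^2 - q))
      \<le> exp (2 * (ln (2 * R) - ln (R^2 - q)))" by (simp add: w_def)
qed simp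

lemma osserman_bound:
  fixes u :: "complex \<Rightarrow> real"
  assumes u: "open U" "C2_on U u" "\<And>y. y \<in> U \<Longrightarrow> laplacian u y = exp (2 * u y)"
    and R: "R > 0" "cball x R \<subseteq> U"
  shows "u x \<le> ln (2 / R)"
proof -
  have "u x \<le> ln (2 * R) - ln (R^2 - cmod (x - x)^2)"
  proof (rule comparison_with_radial_supersolution[OF open_ball bounded_ball _ _
        radial_supersolution_osserman[OF R(1)]])
    show "C2_on (ball x R) u" using C2_on_subset[OF u(2)] R(2) ball_subset_cball by blast
    show "laplacian u y = exp (2 * u y)" if "y \<in> ball x R" for y
      using that R(2) ball_subset_cball by (intro u(3)) blast
    show "cmod (y - x)^2 \<in> {..<R^2}" if "y \<in> ball x R" for y
      using that R(1) by (simp add: dist_norm norm_minus_commute power_strict_mono)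
    show "filterlim (\<lambda>y. ln (2 * R) - ln (R^2 - cmod (y - x)^2) - u y) at_top (at b within ball x R)"
      if "b \<in> frontier (ball x R)" for b
    proof -
      have b: "cmod (b - x) = R" "b \<in> U"
        using that R by (auto simp: dist_norm norm_minus_commute)
      have "((\<lambda>y. ln (2 * R) - u y) \<longlongrightarrow> ln (2 * R) - u b) (at b within ball x R)"
        using C2_on_tendsto[OF u(1,2) b(2)] by (intro tendsto_intros)
      moreover have "filterlim (\<lambda>y. - ln (R^2 - cmod (y - x)^2)) at_top (at b within ball x R)"
      proof (rule filterlim_uminus_ln_at_top)
        show "((\<lambda>y. R^2 - cmod (y - x)^2) \<longlongrightarrow> 0) (at b within ball x R)"
          using b(1) by (auto intro!: tendsto_eq_intros)
        have "eventually (\<lambda>y. y \<in> ball x R) (at b within ball x R)"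
          by (simp add: eventually_at_filter)
        thus "eventually (\<lambda>y. 0 < R^2 - cmod (y - x)^2) (at b within ball x R)"
          by eventually_elim (simp add: dist_norm norm_minus_commute power_strict_mono)
      qed
      ultimately have "filterlim (\<lambda>y. (ln (2 * R) - u y) + - ln (R^2 - cmod (y - x)^2)) at_top
          (at b within ball x R)"
        by (rule filterlim_tendsto_add_at_top)
      thus ?thesis by (simp add: algebra_simps)
    qed
  qed (use R in simp)
  also have "\<dots> = ln (2 / R)" using R(1) by (simp add: ln_div ln_mult power2_eq_square)
  finally show ?thesis .
qed

lemma osserman_bound_punctured:
  fixes u :: "complex \<Rightarrow> real"
  assumes u: "open U" "C2_on U u" "\<And>y. y \<in> U \<Longrightarrow> laplacian u y = exp (2 * u y)"
    and \<rho>: "cball z \<rho> - {z} \<subseteq> U" and x: "0 < cmod (x - z)" "cmod (x - z) < \<rho> / 2"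
  shows "u x \<le> ln 4 - ln (cmod (x - z))"
proof -
  define r where "r = cmod (x - z)"
  have "cball x (r / 2) \<subseteq> cball z \<rho> - {z}"
  proof
    fix y assume "y \<in> cball x (r / 2)"
    hence "cmod (y - x) \<le> r / 2" by (simp add: dist_norm norm_minus_commute)
    moreover have "r \<le> cmod (y - x) + cmod (y - z)" "cmod (y - z) \<le> cmod (y - x) + r"
      using norm_triangle_ineq[of "x - y" "y - z"] norm_triangle_ineq[of "y - x" "x - z"]
      by (simp_all add: r_def norm_minus_commute)
    ultimately show "y \<in> cball z \<rho> - {z}"
      using x by (auto simp: r_def dist_norm norm_minus_commute)
  qed
  hence "u x \<le> ln (2 / (r / 2))"
    using osserman_bound[OF u, of "r / 2" x] x \<rho> by (simp add: r_def)
  thus ?thesis using x by (simp add: r_def ln_div)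
qed

text \<open>For \<open>e = 0\<close> this is the logarithm of the density of the complete hyperbolic metric
  \<open>|dz| / (r ln (\<rho> / r))\<close> on the punctured disc \<open>0 < r < \<rho>\<close>, an exact solution of
  \<open>\<Delta>v = exp (2 v)\<close>; the term \<open>e ln (\<rho> / r)\<close> makes it dominate every solution at the puncture.\<close>
definition punctured_barrier :: "real \<Rightarrow> real \<Rightarrow> real \<Rightarrow> real" where
  "punctured_barrier \<rho> e r = - ln r - ln (ln \<rho> - ln r) + e * (ln \<rho> - ln r)"

text \<open>No sign condition is needed since \<open>ln (- x) = ln x\<close> for the real logarithm.\<close>
lemma ln_sqrt_eq_half_ln: "ln (sqrt q) = ln q / 2"
proof (cases "0 \<le> q")
  case False
  hence "ln (sqrt q) = ln (sqrt (- q))" by (simp add: real_sqrt_minus ln_minus)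
  thus ?thesis using False by (simp add: ln_sqrt ln_minus)
qed (simp add: ln_sqrt)

lemma radial_supersolution_punctured_barrier:
  assumes "\<rho> > 0" "e \<ge> 0"
  shows "radial_supersolution {0<..<\<rho>^2} (\<lambda>q. punctured_barrier \<rho> e (sqrt q))"
proof -
  define L where "L q = ln \<rho> - ln q / 2" for q
  have "(\<lambda>q. punctured_barrier \<rho> e (sqrt q)) = (\<lambda>q. - ln q / 2 - ln (L q) + e * L q)"
    by (simp add: fun_eq_iff punctured_barrier_def L_def ln_sqrt_eq_half_ln)
  moreover have "radial_supersolution {0<..<\<rho>^2} (\<lambda>q. - ln q / 2 - ln (L q) + e * L q)"
    unfolding radial_supersolution_def
  proof (intro conjI exI ballI)
    fix q assume "q \<in> {0<..<\<rho>^2}"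
    hence q: "0 < q" "ln q < ln (\<rho>^2)" using assms(1) by auto
    hence "L q > 0" using assms(1) by (simp add: L_def ln_realpow)
    have L: "(L has_real_derivative - 1 / (2 * q)) (at q)"
      unfolding L_def[abs_def] using q by (auto intro!: derivative_eq_intros)
    show "((\<lambda>q. - ln q / 2 - ln (L q) + e * L q) has_real_derivative (1 / L q - 1 - e) / (2 * q)) (at q)"
      using q(1) \<open>L q > 0\<close> by (auto intro!: derivative_eq_intros L simp: field_simps)
    show "((\<lambda>q. (1 / L q - 1 - e) / (2 * q)) has_real_derivative
        (1 / L q ^ 2 - 2 / L q + 2 + 2 * e) / (4 * q^2)) (at q)"
      using q(1) \<open>L q > 0\<close> by (auto intro!: derivative_eq_intros L simp: field_simps power2_eq_square)
    have "4 * q * ((1 / L q ^ 2 - 2 / L q + 2 + 2 * e) / (4 * q^2)) + 4 * ((1 / L q - 1 - e) / (2 * q))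
        = 1 / (q * L q ^ 2)"
      using q(1) \<open>L q > 0\<close> by (simp add: field_simps power2_eq_square)
    also have "\<dots> \<le> exp (2 * e * L q) / (q * L q ^ 2)"
      using q(1) \<open>L q > 0\<close> assms(2) by (simp add: divide_right_mono)
    also have "\<dots> = exp (2 * (- ln q / 2 - ln (L q) + e * L q))"
      using q(1) \<open>L q > 0\<close> exp_of_nat_mult[of 2 "ln (L q)"]
      by (simp add: exp_diff exp_add ln_mult ln_realpow algebra_simps)
    finally show "4 * q * ((1 / L q ^ 2 - 2 / L q + 2 + 2 * e) / (4 * q^2)) + 4 * ((1 / L q - 1 - e) / (2 * q))
        \<le> exp (2 * (- ln q / 2 - ln (L q) + e * L q))" .
  qed simp
  ultimately show ?thesis by simp
qed

lemma filterlim_punctured_barrier_at_puncture: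
  fixes u :: "complex \<Rightarrow> real"
  assumes u: "open U" "C2_on U u" "\<And>y. y \<in> U \<Longrightarrow> laplacian u y = exp (2 * u y)"
    and \<rho>: "\<rho> > 0" "cball z \<rho> - {z} \<subseteq> U" and "e > 0"
  shows "filterlim (\<lambda>y. punctured_barrier \<rho> e (cmod (y - z)) - u y) at_top (at z)"
proof -
  define s where "s y = ln \<rho> - ln (cmod (y - z))" for y
  have "filterlim (\<lambda>y. - ln (cmod (y - z))) at_top (at z)"
    by (rule filterlim_uminus_ln_at_top) (auto intro!: tendsto_eq_intros simp: eventually_at_filter)
  hence "filterlim (\<lambda>y. ln \<rho> + - ln (cmod (y - z))) at_top (at z)"
    by (rule filterlim_tendsto_add_at_top[OF tendsto_const])
  hence "filterlim s at_top (at z)" by (simp add: s_def[abs_def])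
  moreover have "filterlim (\<lambda>t. e * t - ln t - ln 4) at_top at_top"
    using \<open>e > 0\<close> by real_asymp
  ultimately have "filterlim (\<lambda>y. e * s y - ln (s y) - ln 4) at_top (at z)"
    by (rule filterlim_compose[rotated])
  moreover have "eventually (\<lambda>y. y \<in> ball z (\<rho> / 2) \<and> y \<noteq> z \<and> y \<in> UNIV) (at z)"
    using \<rho>(1) by (intro eventually_at_ball') simp
  hence "eventually (\<lambda>y. e * s y - ln (s y) - ln 4 \<le> punctured_barrier \<rho> e (cmod (y - z)) - u y) (at z)"
  proof eventually_elim
    case (elim y)
    hence "u y \<le> ln 4 - ln (cmod (y - z))"
      by (intro osserman_bound_punctured[OF u \<rho>(2)]) (auto simp: dist_norm norm_minus_commute)
    thus ?case by (simp add: punctured_barrier_def s_def)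
  qed
  ultimately show ?thesis by (rule filterlim_at_top_mono)
qed

lemma filterlim_punctured_barrier_at_circle:
  fixes u :: "complex \<Rightarrow> real"
  assumes "\<rho> > 0" "cmod (b - z) = \<rho>" and u: "(u \<longlongrightarrow> L) (at b within ball z \<rho> - {z})"
  shows "filterlim (\<lambda>y. punctured_barrier \<rho> e (cmod (y - z)) - u y) at_top (at b within ball z \<rho> - {z})"
proof -
  define s where "s y = ln \<rho> - ln (cmod (y - z))" for y
  have s: "(s \<longlongrightarrow> 0) (at b within ball z \<rho> - {z})"
    unfolding s_def using assms(1,2) by (auto intro!: tendsto_eq_intros)
  have "((\<lambda>y. - ln (cmod (y - z)) + e * s y - u y) \<longlongrightarrow> - ln (cmod (b - z)) + e * 0 - L)
      (at b within ball z \<rho> - {z})"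
    using assms(1,2) by (intro tendsto_intros s u) auto
  moreover have "eventually (\<lambda>y. y \<in> ball z \<rho> - {z}) (at b within ball z \<rho> - {z})"
    by (simp add: eventually_at_filter)
  hence "eventually (\<lambda>y. 0 < s y) (at b within ball z \<rho> - {z})"
    by eventually_elim (use assms(1) in \<open>simp add: s_def dist_norm norm_minus_commute\<close>)
  with s have "filterlim (\<lambda>y. - ln (s y)) at_top (at b within ball z \<rho> - {z})"
    by (rule filterlim_uminus_ln_at_top)
  ultimately have "filterlim (\<lambda>y. (- ln (cmod (y - z)) + e * s y - u y) + - ln (s y)) at_top
      (at b within ball z \<rho> - {z})"
    by (rule filterlim_tendsto_add_at_top)
  thus ?thesis by (simp add: punctured_barrier_def s_def algebra_simps)
qed

lemma punctured_barrier_bound: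
  fixes u :: "complex \<Rightarrow> real"
  assumes u: "open U" "C2_on U u" "\<And>y. y \<in> U \<Longrightarrow> laplacian u y = exp (2 * u y)"
    and \<rho>: "\<rho> > 0" "cball z \<rho> - {z} \<subseteq> U" and "e > 0"
    and x: "0 < cmod (x - z)" "cmod (x - z) < \<rho>"
  shows "u x \<le> punctured_barrier \<rho> e (cmod (x - z))"
proof -
  define D where "D = ball z \<rho> - {z}"
  have in_D: "y \<in> D \<longleftrightarrow> 0 < cmod (y - z) \<and> cmod (y - z) < \<rho>" for y
    by (auto simp: D_def dist_norm norm_minus_commute)
  have "D \<subseteq> U" unfolding D_def using \<rho>(2) ball_subset_cball by blast
  have "u x \<le> punctured_barrier \<rho> e (sqrt (cmod (x - z)^2))"
  proof (rule comparison_with_radial_supersolution)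
    show "open D" "bounded D" by (simp_all add: D_def open_Diff bounded_diff)
    show "C2_on D u" using C2_on_subset[OF u(2) \<open>D \<subseteq> U\<close>] .
    show "laplacian u y = exp (2 * u y)" if "y \<in> D" for y using that \<open>D \<subseteq> U\<close> u(3) by blast
    show "radial_supersolution {0<..<\<rho>^2} (\<lambda>q. punctured_barrier \<rho> e (sqrt q))"
      using radial_supersolution_punctured_barrier \<rho>(1) \<open>e > 0\<close> by simp
    show "cmod (y - z)^2 \<in> {0<..<\<rho>^2}" if "y \<in> D" for y
      using that by (simp add: in_D power_strict_mono)
    show "x \<in> D" using x by (simp add: in_D)
    show "filterlim (\<lambda>y. punctured_barrier \<rho> e (sqrt (cmod (y - z)^2)) - u y) at_top (at b within D)"
      if "b \<in> frontier D" for b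
    proof -
      have "closure D \<subseteq> cball z \<rho>" by (rule closure_minimal) (auto simp: D_def)
      hence "b \<in> cball z \<rho>" "b \<notin> D"
        using that \<open>open D\<close> by (auto simp: frontier_def interior_open)
      hence "b = z \<or> cmod (b - z) = \<rho>" by (auto simp: in_D dist_norm norm_minus_commute)
      thus ?thesis
      proof
        assume "b = z"
        thus ?thesis
          using filterlim_within_subset[OF filterlim_punctured_barrier_at_puncture[OF u \<rho> \<open>e > 0\<close>]]
          by simp
      next
        assume b: "cmod (b - z) = \<rho>"
        hence "b \<in> cball z \<rho> - {z}" using \<rho>(1) by (auto simp: dist_norm norm_minus_commute)
        hence "(u \<longlongrightarrow> u b) (at b within D)" using C2_on_tendsto[OF u(1,2)] \<rho>(2) by blast
        thus ?thesis
          using filterlim_punctured_barrier_at_circle[OF \<rho>(1) b] by (simp add: D_def)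
      qed
    qed
  qed
  thus ?thesis by simp
qed

lemma upper_bound_near_puncture:
  fixes u :: "complex \<Rightarrow> real"
  assumes u: "open U" "C2_on U u" "\<And>y. y \<in> U \<Longrightarrow> laplacian u y = exp (2 * u y)"
    and \<rho>: "\<rho> > 0" "cball z \<rho> - {z} \<subseteq> U"
    and x: "0 < cmod (x - z)" "cmod (x - z) < \<rho>"
  shows "u x \<le> - ln (cmod (x - z)) - ln (ln \<rho> - ln (cmod (x - z)))"
proof (rule field_le_epsilon)
  fix \<epsilon> :: real assume "\<epsilon> > 0"
  define s where "s = ln \<rho> - ln (cmod (x - z))"
  have "s > 0" using x \<rho>(1) by (simp add: s_def)
  hence "\<epsilon> / s > 0" using \<open>\<epsilon> > 0\<close> by simp
  from punctured_barrier_bound[OF u \<rho> this x] \<open>s > 0\<close>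
  show "u x \<le> - ln (cmod (x - z)) - ln (ln \<rho> - ln (cmod (x - z))) + \<epsilon>"
    by (simp add: punctured_barrier_def s_def)
qed

lemma bounded_deviation_near_puncture:
  fixes u :: "complex \<Rightarrow> real"
  assumes u: "open U" "C2_on U u" "\<And>y. y \<in> U \<Longrightarrow> laplacian u y = exp (2 * u y)"
    and \<rho>: "\<rho> > 0" "cball z \<rho> - {z} \<subseteq> U" and "R > 0" "\<delta> > 0"
    and lower: "\<And>x. 0 < cmod (x - z) \<Longrightarrow> cmod (x - z) < \<delta> \<Longrightarrow>
      - ln (- R * cmod (x - z) * ln (cmod (x - z) / R)) \<le> u x"
  shows "\<exists>\<delta>'>0. \<forall>x. 0 < cmod (x - z) \<and> cmod (x - z) < \<delta>' \<longrightarrow>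
    \<bar>u x + ln (- cmod (x - z) * ln (cmod (x - z)))\<bar> \<le> \<bar>ln R\<bar> + ln 2"
proof -
  define \<rho>' where "\<rho>' = min \<rho> (1 / 2)"
  have \<rho>': "\<rho>' > 0" "\<rho>' < 1" "cball z \<rho>' - {z} \<subseteq> U"
    using \<rho> by (auto simp: \<rho>'_def)
  define \<delta>' where "\<delta>' = min (\<rho>'^2) (min \<delta> (min R (1 / R)))"
  have "\<delta>' > 0" using \<rho>' \<open>R > 0\<close> \<open>\<delta> > 0\<close> by (simp add: \<delta>'_def)
  moreover have "\<bar>u x + ln (- r * ln r)\<bar> \<le> \<bar>ln R\<bar> + ln 2"
    if x: "0 < cmod (x - z)" "cmod (x - z) < \<delta>'" and r_def: "r = cmod (x - z)" for x r
  proof -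
    have r: "0 < r" "r < \<rho>'^2" "r < \<delta>" "r < R" "r * R < 1"
      using x \<open>R > 0\<close> by (auto simp: \<delta>'_def r_def field_simps)
    have "\<rho>'^2 < \<rho>'" using \<rho>' by (simp add: power2_eq_square)
    hence "r < \<rho>'" "r < 1" using r \<rho>' by auto
    hence "ln r < 0" using r by simp
    have ln_profile: "ln (- r * ln r) = ln r + ln (- ln r)"
      using ln_mult[of r "- ln r"] r \<open>ln r < 0\<close> by simp
    have "ln r < ln (\<rho>'^2)" using r \<rho>' by simp
    hence "ln r < 2 * ln \<rho>'" using \<rho>' by (simp add: ln_realpow)
    hence "ln (- ln r) \<le> ln (2 * (ln \<rho>' - ln r))" using \<open>ln r < 0\<close> by simp
    also have "\<dots> = ln 2 + ln (ln \<rho>' - ln r)"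
      using ln_mult_pos[of 2 "ln \<rho>' - ln r"] r(1) \<open>r < \<rho>'\<close> by simp
    finally have "ln (- ln r) \<le> ln 2 + ln (ln \<rho>' - ln r)" .
    moreover have "u x \<le> - ln r - ln (ln \<rho>' - ln r)"
      using upper_bound_near_puncture[OF u \<rho>'(1,3)] x \<open>r < \<rho>'\<close> by (simp add: r_def)
    ultimately have upper: "u x + ln (- r * ln r) \<le> ln 2"
      using ln_profile by simp
    have "ln (r * R) < 0" using r \<open>R > 0\<close> by simp
    hence "ln R < - ln r" using ln_mult_pos[of r R] r \<open>R > 0\<close> by simp
    moreover have "ln r < ln R" using r by simp
    ultimately have "ln (ln R - ln r) \<le> ln (2 * - ln r)" by simp
    also have "\<dots> = ln 2 + ln (- ln r)" using ln_mult_pos[of 2 "- ln r"] \<open>ln r < 0\<close> by simp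
    finally have "ln (ln R - ln r) \<le> ln 2 + ln (- ln r)" .
    moreover have "- ln (- R * r * ln (r / R)) \<le> u x"
      using lower x r by (simp add: r_def)
    moreover have "- R * r * ln (r / R) = R * (r * (ln R - ln r))"
      using r \<open>R > 0\<close> by (simp add: ln_div algebra_simps)
    ultimately have lower: "- ln R - ln 2 \<le> u x + ln (- r * ln r)"
      using r \<open>R > 0\<close> \<open>ln R < - ln r\<close> ln_profile by (simp add: ln_mult)
    show ?thesis
      unfolding abs_le_iff using upper lower abs_ge_self[of "ln R"] abs_ge_minus_self[of "ln R"] by linarith
  qed
  ultimately show ?thesis by blast
qed

lemma punctured_cball_subset_Diff_finite:
  assumes "open \<Omega>" "finite S" "a \<in> \<Omega>"
  obtains \<rho> where "\<rho> > 0" "cball a \<rho> - {a} \<subseteq> \<Omega> - S"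
proof -
  have "open (\<Omega> - (S - {a}))" using assms(1,2) by (intro open_Diff finite_imp_closed) auto
  moreover have "a \<in> \<Omega> - (S - {a})" using assms(3) by simp
  ultimately obtain \<rho> where "\<rho> > 0" "cball a \<rho> \<subseteq> \<Omega> - (S - {a})"
    unfolding open_contains_cball by blast
  thus thesis by (intro that) auto
qed

theorem proposition5p2:
  fixes \<Omega> :: "complex set" and n :: nat and p :: "nat \<Rightarrow> complex" and u :: "complex \<Rightarrow> real"
  assumes dom: "open \<Omega>" "connected \<Omega>" "bounded \<Omega>" "smooth_boundary \<Omega>"
    and pts: "\<And>l. l < n \<Longrightarrow> p l \<in> \<Omega>"
    and reg: "C2_on (\<Omega> - p ` {..<n}) u"
    and pde: "\<And>x. x \<in> \<Omega> - p ` {..<n} \<Longrightarrow> laplacian u x = exp (2 * u x)"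
    and bdry: "\<And>b. b \<in> frontier \<Omega> \<Longrightarrow> filterlim u at_top (at b within (\<Omega> - p ` {..<n}))"
    and sing: "\<And>l. l < n \<Longrightarrow> filterlim u at_top (at (p l) within (\<Omega> - p ` {..<n}))"
    and lower: "\<And>l. l < n \<Longrightarrow> \<exists>r>0. \<Omega> \<subseteq> ball (p l) r \<and>
        (\<exists>\<delta>>0. \<forall>x. 0 < cmod (x - p l) \<and> cmod (x - p l) < \<delta> \<longrightarrow>
           u x \<ge> - ln (- r * cmod (x - p l) * ln (cmod (x - p l) / r)))"
  shows "\<exists>C. \<forall>l<n. \<exists>\<delta>>0. \<forall>x. 0 < cmod (x - p l) \<and> cmod (x - p l) < \<delta> \<longrightarrow>
           \<bar>u x + ln (- cmod (x - p l) * ln (cmod (x - p l)))\<bar> < C"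
proof -
  let ?bound = "\<lambda>l C. \<exists>\<delta>>0. \<forall>x. 0 < cmod (x - p l) \<and> cmod (x - p l) < \<delta> \<longrightarrow>
    \<bar>u x + ln (- cmod (x - p l) * ln (cmod (x - p l)))\<bar> < C"
  have U: "open (\<Omega> - p ` {..<n})"
    using dom(1) by (intro open_Diff finite_imp_closed) auto
  have "eventually (?bound l) at_top" if "l \<in> {..<n}" for l
  proof -
    have "l < n" using that by simp
    obtain R \<delta> where R: "R > 0" "\<delta> > 0" and lower_l: "\<forall>x. 0 < cmod (x - p l) \<and> cmod (x - p l) < \<delta>
        \<longrightarrow> - ln (- R * cmod (x - p l) * ln (cmod (x - p l) / R)) \<le> u x"
      using lower[OF \<open>l < n\<close>] by blast
    obtain \<rho> where \<rho>: "\<rho> > 0" "cball (p l) \<rho> - {p l} \<subseteq> \<Omega> - p ` {..<n}"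
      by (rule punctured_cball_subset_Diff_finite[OF dom(1) finite_imageI[OF finite_lessThan] pts[OF \<open>l < n\<close>]])
    from bounded_deviation_near_puncture[OF U reg pde \<rho> R lower_l[rule_format]]
    obtain \<delta>' where "\<delta>' > 0" "\<forall>x. 0 < cmod (x - p l) \<and> cmod (x - p l) < \<delta>' \<longrightarrow>
        \<bar>u x + ln (- cmod (x - p l) * ln (cmod (x - p l)))\<bar> \<le> \<bar>ln R\<bar> + ln 2"
      by blast
    hence "?bound l C" if "C > \<bar>ln R\<bar> + ln 2" for C
      using that by (intro exI[of _ \<delta>']) (auto intro: le_less_trans)
    thus ?thesis by (rule eventually_mono[OF eventually_gt_at_top])
  qed
  hence "eventually (\<lambda>C. \<forall>l\<in>{..<n}. ?bound l C) at_top"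
    by (intro eventually_ball_finite) auto
  thus ?thesis by (auto simp: eventually_at_top_linorder)
qed

end
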